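(* (Progress for $\lambda_{\mathrm{ch}}$ terms.) Assume $\Gamma$ is empty or only contains channel references $a_i : \mathsf{Chan}(A_i)$ (for names $a_i$). If $\Gamma \vdash M : A$, then either: (1) $M = \mathbf{return}\ V$ for some value $V$; or (2) $M$ can be written $E[M']$ for an evaluation context $E$, where $M'$ is a communication or concurrency primitive, i.e. $M'$ is of the form $\mathbf{give}\ V\ W$, $\mathbf{take}\ V$, $\mathbf{fork}\ N$, or $\mathbf{newCh}$; or (3) there exists some $M'$ such that $M \longrightarrow_{\mathsf{M}} M'$.
   Context: The calculus $\lambda_{\mathrm{ch}}$. Types: $A,B ::= \mathbf{1} \mid A \to B \mid \mathsf{Chan}(A)$. The symbol $\alpha$ ranges over variables $x$ and runtime names $a$. Values: $V,W ::= \alpha \mid \lambda x.M \mid ()$. Computations: $M,N ::= V\,W \mid \mathbf{let}\ x \Leftarrow M\ \mathbf{in}\ N \mid \mathbf{return}\ V \mid \mathbf{fork}\ M \mid \mathbf{give}\ V\ W \mid \mathbf{take}\ V \mid \mathbf{newCh}$. A typing environment $\Gamma$ maps variables and names to types. Value typing $\Gamma \vdash V : A$: if $\alpha : A \in \Gamma$ then $\Gamma \vdash \alpha : A$; if $\Gamma, x:A \vdash M : B$ then $\Gamma \vdash \lambda x.M : A \to B$; $\Gamma \vdash () : \mathbf{1}$. Computation typing $\Gamma \vdash M : A$: if $\Gamma \vdash V : A \to B$ and $\Gamma \vdash W : A$ then $\Gamma \vdash V\,W : B$; if $\Gamma \vdash M : A$ and $\Gamma, x:A \vdash N : B$ then $\Gamma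 \vdash \mathbf{let}\ x \Leftarrow M\ \mathbf{in}\ N : B$; if $\Gamma \vdash V : A$ then $\Gamma \vdash \mathbf{return}\ V : A$; if $\Gamma \vdash V : A$ and $\Gamma \vdash W : \mathsf{Chan}(A)$ then $\Gamma \vdash \mathbf{give}\ V\ W : \mathbf{1}$; if $\Gamma \vdash V : \mathsf{Chan}(A)$ then $\Gamma \vdash \mathbf{take}\ V : A$; if $\Gamma \vdash M : \mathbf{1}$ then $\Gamma \vdash \mathbf{fork}\ M : \mathbf{1}$; $\Gamma \vdash \mathbf{newCh} : \mathsf{Chan}(A)$ for any $A$. Evaluation contexts: $E ::= [\,] \mid \mathbf{let}\ x \Leftarrow E\ \mathbf{in}\ M$. Term reduction $\longrightarrow_{\mathsf{M}}$ is the least relation with $(\lambda x.M)\,V \longrightarrow_{\mathsf{M}} M\{V/x\}$, $\mathbf{let}\ x \Leftarrow \mathbf{return}\ V\ \mathbf{in}\ M \longrightarrow_{\mathsf{M}} M\{V/x\}$, and $E[M_1] \longrightarrow_{\mathsf{M}} E[M_2]$ whenever $M_1 \longrightarrow_{\mathsf{M}} M_2$. *)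

theory Defs
  imports Main
begin

datatype ty = TUnit | Fun ty ty | Chan ty

type_synonym var = string
type_synonym name = nat

datatype atom = Var var | Name name

datatype val = VAtom atom | Lam var comp | VUnit
and comp = App val val
         | Let var comp comp        (* let x <= M in N, x bound in N *)
         | Return val
         | Fork comp
         | Give val val
         | Take val
         | NewCh

fun subst_val :: "val \<Rightarrow> var \<Rightarrow> val \<Rightarrow> val"
and subst_comp :: "comp \<Rightarrow> var \<Rightarrow> val \<Rightarrow> comp" where
  "subst_val (VAtom (Var y)) x V = (if y = x then V else VAtom (Var y))"
| "subst_val (VAtom (Name a)) x V = VAtom (Name a)"
| "subst_val (Lam y M) x V = (if y = x then Lam y M else Lam y (subst_comp M x V))"
| "subst_val VUnit x V = VUnit"
| "subst_comp (App W1 W2) x V = App (subst_val W1 x V) (subst_val W2 x V)"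
| "subst_comp (Let y M N) x V =
     Let y (subst_comp M x V) (if y = x then N else subst_comp N x V)"
| "subst_comp (Return W) x V = Return (subst_val W x V)"
| "subst_comp (Fork M) x V = Fork (subst_comp M x V)"
| "subst_comp (Give W1 W2) x V = Give (subst_val W1 x V) (subst_val W2 x V)"
| "subst_comp (Take W) x V = Take (subst_val W x V)"
| "subst_comp NewCh x V = NewCh"

type_synonym env = "atom \<Rightarrow> ty option"

inductive val_typed :: "env \<Rightarrow> val \<Rightarrow> ty \<Rightarrow> bool"
and comp_typed :: "env \<Rightarrow> comp \<Rightarrow> ty \<Rightarrow> bool" where
  T_Atom: "\<Gamma> \<alpha> = Some A \<Longrightarrow> val_typed \<Gamma> (VAtom \<alpha>) A"
| T_Lam: "comp_typed (\<Gamma>(Var x \<mapsto> A)) M B \<Longrightarrow> val_typed \<Gamma> (Lam x M) (Fun A B)"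
| T_Unit: "val_typed \<Gamma> VUnit TUnit"
| T_App: "val_typed \<Gamma> V (Fun A B) \<Longrightarrow> val_typed \<Gamma> W A \<Longrightarrow> comp_typed \<Gamma> (App V W) B"
| T_Let: "comp_typed \<Gamma> M A \<Longrightarrow> comp_typed (\<Gamma>(Var x \<mapsto> A)) N B \<Longrightarrow> comp_typed \<Gamma> (Let x M N) B"
| T_Return: "val_typed \<Gamma> V A \<Longrightarrow> comp_typed \<Gamma> (Return V) A"
| T_Give: "val_typed \<Gamma> V A \<Longrightarrow> val_typed \<Gamma> W (Chan A) \<Longrightarrow> comp_typed \<Gamma> (Give V W) TUnit"
| T_Take: "val_typed \<Gamma> V (Chan A) \<Longrightarrow> comp_typed \<Gamma> (Take V) A"
| T_Fork: "comp_typed \<Gamma> M TUnit \<Longrightarrow> comp_typed \<Gamma> (Fork M) TUnit"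
| T_NewCh: "comp_typed \<Gamma> NewCh (Chan A)"

datatype ectx = Hole | ELet var ectx comp

fun plug :: "ectx \<Rightarrow> comp \<Rightarrow> comp" where
  "plug Hole M = M"
| "plug (ELet x E N) M = Let x (plug E M) N"

inductive term_red :: "comp \<Rightarrow> comp \<Rightarrow> bool" where
  R_Beta: "term_red (App (Lam x M) V) (subst_comp M x V)"
| R_Let: "term_red (Let x (Return V) M) (subst_comp M x V)"
| R_Ctx: "term_red M1 M2 \<Longrightarrow> term_red (plug E M1) (plug E M2)"

definition is_prim :: "comp \<Rightarrow> bool" where
  "is_prim M \<longleftrightarrow> (\<exists>V W. M = Give V W) \<or> (\<exists>V. M = Take V) \<or> (\<exists>N. M = Fork N) \<or> M = NewCh"

end

theory Submission
  imports Defs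
begin

text \<open>Since the environment types only names, and only at
  channel types, a value of function type must be a \<open>\<lambda>\<close>-abstraction, so every application is a
  \<open>\<beta>\<close>-redex. For \<open>let x \<Leftarrow> M in N\<close> the induction hypothesis for \<open>M\<close> suffices: a returned value
  gives a redex, a reduction step lifts through the context, and a primitive stays in evaluation
  position. The body \<open>N\<close> is never inspected, which matters because its environment also types
  the variable \<open>x\<close>.\<close>

definition channel_env :: "env \<Rightarrow> bool" where
  "channel_env \<Gamma> \<longleftrightarrow> (\<forall>\<alpha> B. \<Gamma> \<alpha> = Some B \<longrightarrow> (\<exists>a C. \<alpha> = Name a \<and> B = Chan C))"

lemma fun_value_is_Lam:
  assumes "channel_env \<Gamma>" and "val_typed \<Gamma> V (Fun A B)"
  obtains x M where "V = Lam x M"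
  using assms(2) by cases (use assms(1) in \<open>auto simp: channel_env_def\<close>)

lemma prim_in_eval_position:
  assumes "is_prim M"
  shows "\<exists>E M'. M = plug E M' \<and> is_prim M'"
proof -
  have "M = plug Hole M" by simp
  with assms show ?thesis by blast
qed

lemma progress:
  assumes "comp_typed \<Gamma> M A" and "channel_env \<Gamma>"
  shows "(\<exists>V. M = Return V)
       \<or> (\<exists>E M'. M = plug E M' \<and> is_prim M')
       \<or> (\<exists>M'. term_red M M')"
  using assms
proof (induction rule: val_typed_comp_typed.inducts(2)[where ?P1.0 = "\<lambda>_ _ _. True"])
  case (T_App \<Gamma> V A B W)
  then obtain x N where "V = Lam x N" using fun_value_is_Lam by blast
  then show ?case using R_Beta by blast
next
  case (T_Let \<Gamma> M1 A x N B)
  from T_Let.IH(1)[OF T_Let.prems] consider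
      (ret) V where "M1 = Return V"
    | (prim) E M' where "M1 = plug E M'" "is_prim M'"
    | (step) M' where "term_red M1 M'"
    by blast
  then show ?case
  proof cases
    case ret
    then show ?thesis using R_Let by blast
  next
    case prim
    then have "comp.Let x M1 N = plug (ELet x E N) M'" by simp
    then show ?thesis using prim by blast
  next
    case step
    then have "term_red (plug (ELet x Hole N) M1) (plug (ELet x Hole N) M')" by (rule R_Ctx)
    then show ?thesis by auto
  qed
next
  case (T_Return \<Gamma> V A)
  then show ?case by blast
next
  case (T_Give \<Gamma> V A W)
  then show ?case using prim_in_eval_position[of "Give V W"] by (simp add: is_prim_def)
next
  case (T_Take \<Gamma> V A)
  then show ?case using prim_in_eval_position[of "Take V"] by (simp add: is_prim_def)
next
  case (T_Fork \<Gamma> N)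
  then show ?case using prim_in_eval_position[of "Fork N"] by (simp add: is_prim_def)
next
  case (T_NewCh \<Gamma> A)
  then show ?case using prim_in_eval_position[of NewCh] by (simp add: is_prim_def)
qed simp_all

theorem lemma2:
  fixes \<Gamma> :: env and M :: comp and A :: ty
  assumes "\<forall>\<alpha> B. \<Gamma> \<alpha> = Some B \<longrightarrow> (\<exists>a C. \<alpha> = Name a \<and> B = Chan C)"
    and "comp_typed \<Gamma> M A"
  shows "(\<exists>V. M = Return V)
       \<or> (\<exists>E M'. M = plug E M' \<and> is_prim M')
       \<or> (\<exists>M'. term_red M M')"
  using progress[OF assms(2)] assms(1) unfolding channel_env_def by blast

end
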